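(* Consider an elimination path of length $\ell$ accessed by some set of processes, against any adversary. Then at most one process wins, and in any execution in which at least one process accesses the path and all accessing processes complete, not all of them lose. Moreover, if $k\le\ell$ processes access the elimination path, then no process visits a node with index $j>k$, and no process falls off the path.
   Context: Deterministic splitter: an object with a one-time operation $\mathrm{split}()$ returning $\mathrm{stop}$, $\mathrm{left}$ or $\mathrm{right}$, such that if $m\ge1$ processes call it, at most one stops, at most $m-1$ turn left and at most $m-1$ turn right (so a lone caller stops); moreover a process that stops or turns right invoked $\mathrm{split}()$ before any other $\mathrm{split}()$ call on the same object responded. A 2-process TAS object supports $\mathrm{TAS}(i)$, $i\in\{1,2\}$, called by at most two processes with distinct $i$; it returns $0$ (win) to at most one caller, and to exactly one if both complete (and to a lone caller). Elimination path of length $\ell$: nodes $1,\dots,\ell$, node $i$ holding a deterministic splitter $S_i$ and a 2-process TAS object $T_i$. A process enters at node $1$. At node $i$ it calls $S_i.\mathrm{split}()$: if it turns left it loses and stops; if it turns right it moves to node $i+1$ if $i<\ell$, and falls off the path (taking no more steps in the path) if $i=\ell$; if it stops at $S_i$, it calls $T_i.\mathrm{TAS}(1)$ and then moves back toward node $1$: whenever it has won $T_j$ with $j>1$ it calls $T_{j-1}.\mathrm{TAS}(2)$; if it loses any of these TAS calls it loses. A process wins the elimination path if it wins $T_1$. *)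

theory Defs
  imports Main
begin

datatype sresp = Stop | Left | Right

(* Events of an execution: invocations and responses of operations on the
   objects of node i.  RespTAS p i True means TAS returned 0 (win). *)
datatype 'p event =
    InvSplit 'p nat
  | RespSplit 'p nat sresp
  | InvTAS 'p nat nat
  | RespTAS 'p nat bool

fun evp :: "'p event \<Rightarrow> 'p" where
  "evp (InvSplit p i) = p"
| "evp (RespSplit p i r) = p"
| "evp (InvTAS p i a) = p"
| "evp (RespTAS p i w) = p"

datatype pstate =
    AtSplit nat
  | WaitSplit nat
  | AtTas nat nat
  | WaitTas nat nat
  | Won | Lost | FellOff

fun pstep :: "nat \<Rightarrow> pstate \<Rightarrow> 'p event \<Rightarrow> pstate option" where
  "pstep l (AtSplit i) (InvSplit p j) = (if i = j then Some (WaitSplit i) else None)"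
| "pstep l (WaitSplit i) (RespSplit p j r) =
     (if i \<noteq> j then None else
      (case r of Left \<Rightarrow> Some Lost
               | Right \<Rightarrow> (if i < l then Some (AtSplit (Suc i)) else Some FellOff)
               | Stop \<Rightarrow> Some (AtTas i 1)))"
| "pstep l (AtTas i a) (InvTAS p j b) = (if i = j \<and> a = b then Some (WaitTas i a) else None)"
| "pstep l (WaitTas i a) (RespTAS p j w) =
     (if i \<noteq> j then None else
      (if w then (if i = 1 then Some Won else Some (AtTas (i - 1) 2)) else Some Lost))"
| "pstep l s e = None"

fun exec_from :: "nat \<Rightarrow> ('p \<Rightarrow> pstate) \<Rightarrow> 'p event list \<Rightarrow> ('p \<Rightarrow> pstate) option" where
  "exec_from l s [] = Some s"
| "exec_from l s (e # es) =
     (case pstep l (s (evp e)) e of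
        None \<Rightarrow> None
      | Some q \<Rightarrow> exec_from l (s(evp e := q)) es)"

definition exec :: "nat \<Rightarrow> 'p event list \<Rightarrow> ('p \<Rightarrow> pstate) option" where
  "exec l tr = exec_from l (\<lambda>_. AtSplit 1) tr"

definition accessing :: "'p event list \<Rightarrow> 'p set" where
  "accessing tr = {p. \<exists>e \<in> set tr. evp e = p}"

definition completed :: "pstate \<Rightarrow> bool" where
  "completed s \<longleftrightarrow> s = Won \<or> s = Lost \<or> s = FellOff"

fun node_of :: "pstate \<Rightarrow> nat option" where
  "node_of (AtSplit i) = Some i"
| "node_of (WaitSplit i) = Some i"
| "node_of (AtTas i a) = Some i"
| "node_of (WaitTas i a) = Some i"
| "node_of _ = None"

definition visits :: "nat \<Rightarrow> 'p event list \<Rightarrow> 'p \<Rightarrow> nat \<Rightarrow> bool" where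
  "visits l tr p j \<longleftrightarrow>
     (\<exists>n \<le> length tr. \<exists>s. exec l (take n tr) = Some s \<and> node_of (s p) = Some j)"

definition splitter_ok :: "nat \<Rightarrow> 'p event list \<Rightarrow> bool" where
  "splitter_ok i tr \<longleftrightarrow>
     (let m = card {p. InvSplit p i \<in> set tr} in
        card {p. RespSplit p i Stop \<in> set tr} \<le> 1
      \<and> card {p. RespSplit p i Left \<in> set tr} \<le> m - 1
      \<and> card {p. RespSplit p i Right \<in> set tr} \<le> m - 1
      \<and> (\<forall>c d p q r r'. c < length tr \<longrightarrow> d < length tr \<longrightarrow>
            tr ! c = InvSplit p i \<longrightarrow> RespSplit p i r \<in> set tr \<longrightarrow> r \<noteq> Left \<longrightarrow>
            tr ! d = RespSplit q i r' \<longrightarrow> q \<noteq> p \<longrightarrow> c < d))"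

definition tas_used_ok :: "nat \<Rightarrow> 'p event list \<Rightarrow> bool" where
  "tas_used_ok i tr \<longleftrightarrow>
     (\<forall>p a. InvTAS p i a \<in> set tr \<longrightarrow> a \<in> {1, 2})
   \<and> (\<forall>p q a b. InvTAS p i a \<in> set tr \<longrightarrow> InvTAS q i b \<in> set tr \<longrightarrow> p \<noteq> q \<longrightarrow> a \<noteq> b)
   \<and> (\<forall>p. length (filter (\<lambda>e. \<exists>a. e = InvTAS p i a) tr) \<le> 1)"

definition tas_ok :: "nat \<Rightarrow> 'p event list \<Rightarrow> bool" where
  "tas_ok i tr \<longleftrightarrow>
     (\<forall>p q. RespTAS p i True \<in> set tr \<longrightarrow> RespTAS q i True \<in> set tr \<longrightarrow> p = q)
   \<and> (((\<exists>p a. InvTAS p i a \<in> set tr) \<and>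
        (\<forall>p a. InvTAS p i a \<in> set tr \<longrightarrow> (\<exists>w. RespTAS p i w \<in> set tr)))
       \<longrightarrow> (\<exists>p. RespTAS p i True \<in> set tr))"

(* the adversary may choose any responses consistent with the object specifications *)
definition objects_ok :: "nat \<Rightarrow> 'p event list \<Rightarrow> bool" where
  "objects_ok l tr \<longleftrightarrow>
     (\<forall>i \<in> {1..l}. splitter_ok i tr \<and> (tas_used_ok i tr \<longrightarrow> tas_ok i tr))"

end

theory Submission
  imports Defs
begin

text \<open>
  A process runs the protocol on its own subsequence of the execution, so everything it does is
  governed by an invariant linking its local state to its own history. The winner is unique
  because every winner won T_1. Applying the TAS specifications requires that every T_i is used
  correctly, which follows by downward induction on i: two processes call T_i with the same
  argument only if both stopped at S_i or both won T_(i+1). If every process lost, the highest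
  splitter ever invoked has a caller that does not turn left; it cannot turn right, so it stops,
  and the chain of TAS objects below it then produces a winner of T_1. Finally, only processes
  turning right at S_(i-1) reach node i and not all of them do, so at most k + 1 - i of the k
  accessing processes invoke S_i, and a right turn at S_i forces i < k.
\<close>

fun run_proc :: "nat \<Rightarrow> pstate \<Rightarrow> 'p event list \<Rightarrow> pstate option" where
  "run_proc l q [] = Some q"
| "run_proc l q (e # es) = (case pstep l q e of None \<Rightarrow> None | Some q' \<Rightarrow> run_proc l q' es)"

lemma run_proc_snoc:
  "run_proc l q (es @ [e]) = (case run_proc l q es of None \<Rightarrow> None | Some q' \<Rightarrow> pstep l q' e)"
  by (induction es arbitrary: q) (auto split: option.splits)

lemma exec_from_project:
  "exec_from l s tr = Some s' \<Longrightarrow> run_proc l (s p) (filter (\<lambda>e. evp e = p) tr) = Some (s' p)"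
proof (induction tr arbitrary: s)
  case (Cons e tr)
  then obtain q where q: "pstep l (s (evp e)) e = Some q"
    and rest: "exec_from l (s(evp e := q)) tr = Some s'"
    by (auto split: option.splits)
  show ?case
    using Cons.IH[OF rest] q by (cases "evp e = p") auto
qed simp

fun post_state :: "nat \<Rightarrow> 'p event \<Rightarrow> pstate" where
  "post_state l (InvSplit p j) = WaitSplit j"
| "post_state l (RespSplit p j r) =
     (case r of Left \<Rightarrow> Lost | Right \<Rightarrow> (if j < l then AtSplit (Suc j) else FellOff) | Stop \<Rightarrow> AtTas j 1)"
| "post_state l (InvTAS p j a) = WaitTas j a"
| "post_state l (RespTAS p j w) = (if w then (if j = 1 then Won else AtTas (j - 1) 2) else Lost)"

lemma pstep_post_state: "pstep l q e = Some q' \<Longrightarrow> q' = post_state l e"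
  by (cases q; cases e) (auto split: if_splits sresp.splits)

lemma pstep_SomeE:
  assumes "pstep l q e = Some q'"
  obtains (InvSplit) j where "q = AtSplit j" "e = InvSplit (evp e) j" "q' = WaitSplit j"
  | (RespSplit) j r where "q = WaitSplit j" "e = RespSplit (evp e) j r" "q' = post_state l e"
  | (InvTAS) i a where "q = AtTas i a" "e = InvTAS (evp e) i a" "q' = WaitTas i a"
  | (RespTAS) i a w where "q = WaitTas i a" "e = RespTAS (evp e) i w" "q' = post_state l e"
  using assms by (cases q; cases e) (auto split: if_splits sresp.splits)

lemma run_proc_event_followed:
  assumes "run_proc l q0 es = Some q" and "e \<in> set es"
  shows "q = post_state l e \<or> (\<exists>e' \<in> set es. pstep l (post_state l e) e' \<noteq> None)"
  using assms
proof (induction es arbitrary: q0)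
  case (Cons e1 es)
  then obtain q1 where q1: "pstep l q0 e1 = Some q1" and run: "run_proc l q1 es = Some q"
    by (auto split: option.splits)
  show ?case
  proof (cases "e \<in> set es")
    case True
    then show ?thesis using Cons.IH[OF run] by auto
  next
    case False
    with Cons.prems have "e = e1" by simp
    with q1 have "q1 = post_state l e" by (simp add: pstep_post_state)
    with run show ?thesis by (cases es) (auto split: option.splits)
  qed
qed simp

lemma run_proc_event_preceded:
  assumes "run_proc l q0 es = Some q" and "e \<in> set es"
  shows "\<exists>xs ys qa. es = xs @ e # ys \<and> run_proc l q0 xs = Some qa \<and> pstep l qa e \<noteq> None"
  using assms
proof (induction es arbitrary: q0)
  case (Cons e1 es)
  then obtain q1 where q1: "pstep l q0 e1 = Some q1" and run: "run_proc l q1 es = Some q"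
    by (auto split: option.splits)
  show ?case
  proof (cases "e = e1")
    case True
    then show ?thesis using q1 by (intro exI[of _ "[]"] exI[of _ es] exI[of _ q0]) auto
  next
    case False
    with Cons.prems obtain xs ys qa where "es = xs @ e # ys" "run_proc l q1 xs = Some qa" "pstep l qa e \<noteq> None"
      using Cons.IH[OF run] by auto
    then show ?thesis using q1 by (intro exI[of _ "e1 # xs"] exI[of _ ys] exI[of _ qa]) auto
  qed
qed simp

text \<open>The part of its own history \<open>E\<close> that each local state of process \<open>p\<close> guarantees.\<close>

fun state_ok :: "nat \<Rightarrow> 'p \<Rightarrow> 'p event set \<Rightarrow> pstate \<Rightarrow> bool" where
  "state_ok l p E (AtSplit j) \<longleftrightarrow>
     1 \<le> j \<and> j \<le> l \<and> (j = 1 \<or> RespSplit p (j - 1) Right \<in> E) \<and> (\<forall>i a. InvTAS p i a \<notin> E)"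
| "state_ok l p E (WaitSplit j) \<longleftrightarrow>
     1 \<le> j \<and> j \<le> l \<and> (j = 1 \<or> RespSplit p (j - 1) Right \<in> E) \<and> (\<forall>i a. InvTAS p i a \<notin> E)
     \<and> InvSplit p j \<in> E"
| "state_ok l p E (AtTas i a) \<longleftrightarrow>
     1 \<le> i \<and> i \<le> l \<and> (a = 1 \<and> RespSplit p i Stop \<in> E \<or> a = 2 \<and> RespTAS p (Suc i) True \<in> E)
     \<and> (\<exists>j \<ge> i. RespSplit p j Stop \<in> E) \<and> (\<forall>j b. InvTAS p j b \<in> E \<longrightarrow> i < j)"
| "state_ok l p E (WaitTas i a) \<longleftrightarrow>
     1 \<le> i \<and> i \<le> l \<and> InvTAS p i a \<in> E
     \<and> (\<exists>j \<ge> i. RespSplit p j Stop \<in> E) \<and> (\<forall>j b. InvTAS p j b \<in> E \<longrightarrow> i \<le> j)"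
| "state_ok l p E Won \<longleftrightarrow> RespTAS p 1 True \<in> E"
| "state_ok l p E FellOff \<longleftrightarrow> RespSplit p l Right \<in> E"
| "state_ok l p E Lost \<longleftrightarrow> True"

definition history_ok :: "nat \<Rightarrow> 'p \<Rightarrow> 'p event list \<Rightarrow> pstate \<Rightarrow> bool" where
  "history_ok l p es q \<longleftrightarrow>
     state_ok l p (set es) q \<and> (\<forall>i. length (filter (\<lambda>e. \<exists>a. e = InvTAS p i a) es) \<le> 1)"

lemma history_ok_step:
  assumes hist: "history_ok l p es q" and step: "pstep l q e = Some q'" and "evp e = p"
  shows "history_ok l p (es @ [e]) q'"
  using step
proof (cases rule: pstep_SomeE)
  case (InvSplit j)
  then show ?thesis using hist \<open>evp e = p\<close> by (auto simp: history_ok_def)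
next
  case (RespSplit j r)
  then show ?thesis using hist \<open>evp e = p\<close>
    by (cases r) (auto simp: history_ok_def)
next
  case (InvTAS i a)
  then have "filter (\<lambda>e. \<exists>b. e = InvTAS p i b) es = []"
    using hist by (force simp: history_ok_def filter_empty_conv)
  with InvTAS show ?thesis using hist \<open>evp e = p\<close>
    by (auto simp: history_ok_def)
next
  case (RespTAS i a w)
  with \<open>evp e = p\<close> have e: "e = RespTAS p i w" by simp
  from hist RespTAS(1) obtain j where "i \<le> j" "RespSplit p j Stop \<in> set es"
    and later: "\<And>j b. InvTAS p j b \<in> set es \<Longrightarrow> i \<le> j"
    by (auto simp: history_ok_def)
  then have "\<exists>j' \<ge> i - 1. RespSplit p j' Stop \<in> set es" by (intro exI[of _ j]) simp
  moreover have "Suc (i - 1) = i" "i \<noteq> 1 \<Longrightarrow> 1 \<le> i - 1"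
    using hist RespTAS(1) by (auto simp: history_ok_def)
  ultimately show ?thesis using RespTAS e hist
    by (auto simp: history_ok_def dest: later)
qed

lemma history_ok_run:
  assumes "l \<ge> 1" and "\<forall>e \<in> set es. evp e = p" and "run_proc l (AtSplit 1) es = Some q"
  shows "history_ok l p es q"
  using assms(2,3)
proof (induction es arbitrary: q rule: rev_induct)
  case Nil
  then show ?case using \<open>l \<ge> 1\<close> by (auto simp: history_ok_def)
next
  case (snoc e es)
  then obtain q0 where "run_proc l (AtSplit 1) es = Some q0" and "pstep l q0 e = Some q"
    by (auto simp: run_proc_snoc split: option.splits)
  with snoc show ?case by (simp add: history_ok_step)
qed

lemma event_owner_accessing: "e \<in> set tr \<Longrightarrow> evp e \<in> accessing tr"
  by (auto simp: accessing_def)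

lemma finite_accessing: "finite (accessing tr)"
  by (rule finite_subset[of _ "evp ` set tr"]) (auto simp: accessing_def)

lemma finite_event_owners:
  assumes "\<And>p. evp (f p) = p"
  shows "finite {p. f p \<in> set tr}"
proof (rule finite_subset[OF _ finite_accessing])
  show "{p. f p \<in> set tr} \<subseteq> accessing tr"
    using event_owner_accessing[of "f _" tr] assms by auto
qed

lemma splitter_ok_Stop_unique:
  assumes "splitter_ok i tr" "RespSplit p i Stop \<in> set tr" "RespSplit q i Stop \<in> set tr"
  shows "p = q"
proof -
  have "card {p. RespSplit p i Stop \<in> set tr} \<le> Suc 0"
    using assms(1) by (simp add: splitter_ok_def Let_def)
  with finite_event_owners[of "\<lambda>p. RespSplit p i Stop" tr] assms(2,3) show ?thesis
    by (simp add: card_le_Suc0_iff_eq)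
qed

lemma splitter_ok_not_all_Left:
  assumes "splitter_ok i tr" and "InvSplit p i \<in> set tr"
  shows "\<exists>q. InvSplit q i \<in> set tr \<and> RespSplit q i Left \<notin> set tr"
proof (rule ccontr)
  assume "\<not> ?thesis"
  then have "{q. InvSplit q i \<in> set tr} \<subseteq> {q. RespSplit q i Left \<in> set tr}" by auto
  moreover have "finite {q. RespSplit q i Left \<in> set tr}" by (rule finite_event_owners) simp
  ultimately have "card {q. InvSplit q i \<in> set tr} \<le> card {q. RespSplit q i Left \<in> set tr}"
    by (simp add: card_mono)
  moreover have "card {q. RespSplit q i Left \<in> set tr} \<le> card {q. InvSplit q i \<in> set tr} - 1"
    using assms(1) by (simp add: splitter_ok_def Let_def)
  moreover have "card {q. InvSplit q i \<in> set tr} > 0"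
    using assms(2) finite_event_owners[of "\<lambda>q. InvSplit q i" tr] by (auto simp: card_gt_0_iff)
  ultimately show False by linarith
qed

locale path_execution =
  fixes l :: nat and tr :: "'p event list" and st :: "'p \<Rightarrow> pstate"
  assumes path_nonempty: "l \<ge> 1" and exec_tr: "exec l tr = Some st"
begin

abbreviation hist :: "'p \<Rightarrow> 'p event list" where
  "hist p \<equiv> filter (\<lambda>e. evp e = p) tr"

lemma run_hist: "run_proc l (AtSplit 1) (hist p) = Some (st p)"
  using exec_from_project[of l "\<lambda>_. AtSplit 1" tr st p] exec_tr by (simp add: exec_def)

lemma history_ok_hist: "history_ok l p (hist p) (st p)"
  using history_ok_run[OF path_nonempty _ run_hist] by simp

lemma event_pre_state:
  assumes "e \<in> set tr"
  obtains xs qa where "set xs \<subseteq> set tr" "history_ok l (evp e) xs qa" "pstep l qa e \<noteq> None"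
proof -
  from assms have "e \<in> set (hist (evp e))" by simp
  from run_proc_event_preceded[OF run_hist this] obtain xs ys qa where
    split: "hist (evp e) = xs @ e # ys" and run: "run_proc l (AtSplit 1) xs = Some qa"
    and enabled: "pstep l qa e \<noteq> None" by blast
  from split have xs: "set xs \<subseteq> set (hist (evp e))"
    by (simp add: subset_iff)
  then have "history_ok l (evp e) xs qa"
    using history_ok_run[OF path_nonempty _ run] by auto
  with xs enabled show thesis using that by auto
qed

lemma event_followed:
  assumes "e \<in> set tr"
  shows "st (evp e) = post_state l e
    \<or> (\<exists>e' \<in> set tr. evp e' = evp e \<and> pstep l (post_state l e) e' \<noteq> None)"
  using run_proc_event_followed[OF run_hist, of e "evp e"] assms by auto

lemma InvSplit_node:
  assumes "InvSplit p j \<in> set tr"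
  shows "1 \<le> j \<and> j \<le> l \<and> (j = 1 \<or> RespSplit p (j - 1) Right \<in> set tr)"
proof -
  obtain xs qa where "set xs \<subseteq> set tr" "history_ok l p xs qa" "pstep l qa (InvSplit p j) \<noteq> None"
    using event_pre_state[OF assms] by auto
  then show ?thesis by (cases qa) (auto simp: history_ok_def split: if_splits)
qed

lemma RespSplit_invoked:
  assumes "RespSplit p j r \<in> set tr"
  shows "InvSplit p j \<in> set tr"
proof -
  obtain xs qa where "set xs \<subseteq> set tr" "history_ok l p xs qa" "pstep l qa (RespSplit p j r) \<noteq> None"
    using event_pre_state[OF assms] by auto
  then show ?thesis by (cases qa) (auto simp: history_ok_def split: if_splits)
qed

lemma InvTAS_cause:
  assumes "InvTAS p i a \<in> set tr"
  shows "1 \<le> i \<and> i \<le> l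
    \<and> (a = 1 \<and> RespSplit p i Stop \<in> set tr \<or> a = 2 \<and> RespTAS p (Suc i) True \<in> set tr)"
proof -
  obtain xs qa where "set xs \<subseteq> set tr" "history_ok l p xs qa" "pstep l qa (InvTAS p i a) \<noteq> None"
    using event_pre_state[OF assms] by auto
  then show ?thesis by (cases qa) (auto simp: history_ok_def split: if_splits)
qed

lemma RespTAS_invoked:
  assumes "RespTAS p i w \<in> set tr"
  shows "\<exists>a. InvTAS p i a \<in> set tr"
proof -
  obtain xs qa where "set xs \<subseteq> set tr" "history_ok l p xs qa" "pstep l qa (RespTAS p i w) \<noteq> None"
    using event_pre_state[OF assms] by auto
  then show ?thesis by (cases qa) (auto simp: history_ok_def split: if_splits)
qed

lemma accessing_InvSplit_1:
  assumes "p \<in> accessing tr"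
  shows "InvSplit p 1 \<in> set tr"
proof -
  from assms obtain e es where hist: "hist p = e # es"
    by (cases "hist p") (auto simp: accessing_def filter_empty_conv)
  with run_hist[of p] have "pstep l (AtSplit 1) e \<noteq> None" by (auto split: option.splits)
  moreover have "e \<in> set (hist p)" using hist by simp
  ultimately show ?thesis by (cases e) (auto split: if_splits)
qed

lemma Won_RespTAS_1: "st p = Won \<Longrightarrow> RespTAS p 1 True \<in> set tr"
  using history_ok_hist[of p] by (simp add: history_ok_def)

lemma FellOff_RespSplit_last: "st p = FellOff \<Longrightarrow> RespSplit p l Right \<in> set tr"
  using history_ok_hist[of p] by (simp add: history_ok_def)

lemma InvTAS_once: "length (filter (\<lambda>e. \<exists>a. e = InvTAS p i a) tr) \<le> 1"
proof -
  have "length (filter (\<lambda>e. \<exists>a. e = InvTAS p i a) (hist p)) \<le> 1"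
    using history_ok_hist[of p] unfolding history_ok_def by blast
  moreover have "filter (\<lambda>e. \<exists>a. e = InvTAS p i a) (hist p) = filter (\<lambda>e. \<exists>a. e = InvTAS p i a) tr"
    by (induction tr) auto
  ultimately show ?thesis by (simp only:)
qed

lemma node_of_final_state:
  assumes "node_of (st p) = Some j"
  shows "j = 1 \<or> (\<exists>i. j \<le> Suc i \<and> RespSplit p i Right \<in> set tr)"
proof -
  have "\<exists>j'. j \<le> j' \<and> 1 \<le> j \<and> (j' = 1 \<or> RespSplit p (j' - 1) Right \<in> set tr)"
  proof (cases "st p")
    case (AtTas i a)
    with assms history_ok_hist[of p] obtain j' where "j \<le> j'" "1 \<le> j"
      and stop: "RespSplit p j' Stop \<in> set tr" by (auto simp: history_ok_def)
    with InvSplit_node[OF RespSplit_invoked[OF stop]] show ?thesis by auto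
  next
    case (WaitTas i a)
    with assms history_ok_hist[of p] obtain j' where "j \<le> j'" "1 \<le> j"
      and stop: "RespSplit p j' Stop \<in> set tr" by (auto simp: history_ok_def)
    with InvSplit_node[OF RespSplit_invoked[OF stop]] show ?thesis by auto
  qed (use assms history_ok_hist[of p] in \<open>auto simp: history_ok_def\<close>)
  then obtain j' where "j \<le> j'" "1 \<le> j" and j': "j' = 1 \<or> RespSplit p (j' - 1) Right \<in> set tr"
    by blast
  show ?thesis
  proof (cases "j' = 1")
    case True
    with \<open>j \<le> j'\<close> \<open>1 \<le> j\<close> show ?thesis by simp
  next
    case False
    with j' \<open>j \<le> j'\<close> show ?thesis by (intro disjI2 exI[of _ "j' - 1"]) simp
  qed
qed

text \<open>A process that has lost has completed, so after each of its events it took the step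
  the protocol prescribes next.\<close>

lemma Lost_event_followed:
  assumes "st (evp e) = Lost" and "e \<in> set tr" and "post_state l e \<noteq> Lost"
  shows "\<exists>e' \<in> set tr. evp e' = evp e \<and> pstep l (post_state l e) e' \<noteq> None"
  using event_followed[OF assms(2)] assms(1,3) by auto

lemma Lost_InvSplit_answered:
  assumes "st p = Lost" and "InvSplit p j \<in> set tr"
  shows "\<exists>r. RespSplit p j r \<in> set tr"
proof -
  from Lost_event_followed[of "InvSplit p j"] assms obtain e' where
    e': "e' \<in> set tr" "evp e' = p" "pstep l (post_state l (InvSplit p j)) e' \<noteq> None"
    by auto
  show ?thesis by (cases e') (use e' in \<open>auto split: if_splits\<close>)
qed

lemma Lost_Right_moves_on:
  assumes "st p = Lost" and "RespSplit p j Right \<in> set tr"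
  shows "InvSplit p (Suc j) \<in> set tr"
proof -
  from Lost_event_followed[of "RespSplit p j Right"] assms obtain e' where
    e': "e' \<in> set tr" "evp e' = p" "pstep l (post_state l (RespSplit p j Right)) e' \<noteq> None"
    by (cases "j < l") auto
  show ?thesis by (cases e') (use e' in \<open>auto split: if_splits\<close>)
qed

lemma Lost_Stop_invokes_TAS:
  assumes "st p = Lost" and "RespSplit p j Stop \<in> set tr"
  shows "InvTAS p j 1 \<in> set tr"
proof -
  from Lost_event_followed[of "RespSplit p j Stop"] assms obtain e' where
    e': "e' \<in> set tr" "evp e' = p" "pstep l (post_state l (RespSplit p j Stop)) e' \<noteq> None"
    by auto
  show ?thesis by (cases e') (use e' in \<open>auto split: if_splits\<close>)
qed

lemma Lost_InvTAS_answered: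
  assumes "st p = Lost" and "InvTAS p i a \<in> set tr"
  shows "\<exists>w. RespTAS p i w \<in> set tr"
proof -
  from Lost_event_followed[of "InvTAS p i a"] assms obtain e' where
    e': "e' \<in> set tr" "evp e' = p" "pstep l (post_state l (InvTAS p i a)) e' \<noteq> None"
    by auto
  show ?thesis by (cases e') (use e' in \<open>auto split: if_splits\<close>)
qed

lemma Lost_TAS_win_descends:
  assumes "st p = Lost" and "RespTAS p i True \<in> set tr"
  shows "i \<noteq> 1 \<and> InvTAS p (i - 1) 2 \<in> set tr"
proof -
  from Lost_event_followed[of "RespTAS p i True"] assms obtain e' where
    e': "e' \<in> set tr" "evp e' = p" "pstep l (post_state l (RespTAS p i True)) e' \<noteq> None"
    by (cases "i = 1") auto
  show ?thesis by (cases e') (use e' in \<open>auto split: if_splits\<close>)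
qed

end

locale path_adversary = path_execution +
  assumes objects_ok: "objects_ok l tr"
begin

lemma splitter_ok_node: "1 \<le> i \<Longrightarrow> i \<le> l \<Longrightarrow> splitter_ok i tr"
  using objects_ok by (simp add: objects_ok_def)

lemma tas_used_ok: "tas_used_ok i tr"
proof (induction "l - i" arbitrary: i rule: less_induct)
  case less
  have same_arg: "p = q" if "InvTAS p i a \<in> set tr" and "InvTAS q i a \<in> set tr" for p q a
  proof -
    from InvTAS_cause[OF that(1)] InvTAS_cause[OF that(2)] consider
      (stopped) "RespSplit p i Stop \<in> set tr" "RespSplit q i Stop \<in> set tr" "1 \<le> i" "i \<le> l"
    | (won) "RespTAS p (Suc i) True \<in> set tr" "RespTAS q (Suc i) True \<in> set tr"
      by auto
    then show ?thesis
    proof cases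
      case stopped
      then show ?thesis using splitter_ok_Stop_unique[OF splitter_ok_node] by blast
    next
      case won
      obtain b where "InvTAS p (Suc i) b \<in> set tr" using RespTAS_invoked[OF won(1)] by blast
      then have "Suc i \<le> l" using InvTAS_cause by simp
      with less[of "Suc i"] objects_ok have "tas_ok (Suc i) tr" by (simp add: objects_ok_def)
      with won show ?thesis by (simp add: tas_ok_def)
    qed
  qed
  have "a \<in> {1, 2}" if "InvTAS p i a \<in> set tr" for p a
    using InvTAS_cause[OF that] by auto
  with same_arg InvTAS_once show ?case
    unfolding tas_used_ok_def by blast
qed

lemma tas_ok_node: "1 \<le> i \<Longrightarrow> i \<le> l \<Longrightarrow> tas_ok i tr"
  using objects_ok tas_used_ok by (simp add: objects_ok_def)

lemma at_most_one_Won: "st p = Won \<Longrightarrow> st q = Won \<Longrightarrow> p = q"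
  using Won_RespTAS_1 tas_ok_node[OF order_refl path_nonempty] by (simp add: tas_ok_def)

lemma all_Lost_no_InvTAS:
  assumes lost: "\<forall>p \<in> accessing tr. st p = Lost"
  shows "InvTAS p i a \<notin> set tr"
proof
  assume "InvTAS p i a \<in> set tr"
  then show False
  proof (induction i arbitrary: p a rule: less_induct)
    case (less i)
    have owner_lost: "st (evp e) = Lost" if "e \<in> set tr" for e
      using lost event_owner_accessing[OF that] by blast
    have "\<exists>w. RespTAS q i w \<in> set tr" if "InvTAS q i b \<in> set tr" for q b
      using Lost_InvTAS_answered[OF owner_lost[OF that, simplified] that] .
    moreover have "1 \<le> i" "i \<le> l" using InvTAS_cause[OF less.prems] by auto
    ultimately obtain q where won: "RespTAS q i True \<in> set tr"
      using tas_ok_node less.prems unfolding tas_ok_def by blast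
    from Lost_TAS_win_descends[OF owner_lost[OF won, simplified] won] \<open>1 \<le> i\<close>
    show False using less.IH[of "i - 1"] by auto
  qed
qed

lemma all_Lost_no_InvSplit:
  assumes lost: "\<forall>p \<in> accessing tr. st p = Lost"
  shows "InvSplit p j \<notin> set tr"
proof (induction "Suc l - j" arbitrary: p j rule: less_induct)
  case less
  show ?case
  proof
    assume invoked: "InvSplit p j \<in> set tr"
    then have "1 \<le> j" "j \<le> l" using InvSplit_node by auto
    then obtain q where q: "InvSplit q j \<in> set tr" "RespSplit q j Left \<notin> set tr"
      using splitter_ok_not_all_Left[OF splitter_ok_node invoked] by blast
    have q_lost: "st q = Lost"
      using lost event_owner_accessing[OF q(1)] by simp
    then obtain r where r: "RespSplit q j r \<in> set tr"
      using Lost_InvSplit_answered q(1) by blast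
    show False
    proof (cases r)
      case Stop
      with r have "InvTAS q j 1 \<in> set tr" using Lost_Stop_invokes_TAS[OF q_lost] by simp
      then show False using all_Lost_no_InvTAS[OF lost] by blast
    next
      case Left
      then show False using q(2) r by simp
    next
      case Right
      then have "InvSplit q (Suc j) \<in> set tr" using Lost_Right_moves_on[OF q_lost] r by simp
      moreover have "Suc l - Suc j < Suc l - j" using \<open>j \<le> l\<close> by simp
      ultimately show False using less.hyps by blast
    qed
  qed
qed

lemma not_all_Lost:
  assumes "accessing tr \<noteq> {}"
  shows "\<exists>p \<in> accessing tr. st p \<noteq> Lost"
proof (rule ccontr)
  assume "\<not> ?thesis"
  then have "\<forall>p \<in> accessing tr. st p = Lost" by blast
  with assms accessing_InvSplit_1 all_Lost_no_InvSplit show False by blast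
qed

text \<open>With truncated subtraction the bound is \<open>0\<close> beyond node \<open>k + 1\<close>.\<close>

lemma InvSplit_callers_bound:
  assumes "1 \<le> i" "i \<le> l"
  shows "card {p. InvSplit p i \<in> set tr} \<le> card (accessing tr) + 1 - i"
  using assms
proof (induction i)
  case (Suc i)
  show ?case
  proof (cases "i = 0")
    case True
    have "{p. InvSplit p 1 \<in> set tr} \<subseteq> accessing tr"
      using event_owner_accessing by fastforce
    with True show ?thesis by (simp add: card_mono finite_accessing)
  next
    case False
    have "{p. InvSplit p (Suc i) \<in> set tr} \<subseteq> {p. RespSplit p i Right \<in> set tr}"
      using InvSplit_node[of _ "Suc i"] False by auto
    moreover have "finite {p. RespSplit p i Right \<in> set tr}" by (rule finite_event_owners) simp
    ultimately have "card {p. InvSplit p (Suc i) \<in> set tr} \<le> card {p. RespSplit p i Right \<in> set tr}"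
      by (simp add: card_mono)
    also have "\<dots> \<le> card {p. InvSplit p i \<in> set tr} - 1"
      using splitter_ok_node[of i] False Suc.prems by (simp add: splitter_ok_def Let_def)
    also have "\<dots> \<le> card (accessing tr) + 1 - Suc i"
      using Suc.IH False Suc.prems by simp
    finally show ?thesis .
  qed
qed simp

lemma Right_below_card_accessing:
  assumes "RespSplit p i Right \<in> set tr"
  shows "i < card (accessing tr)"
proof -
  have "1 \<le> i" "i \<le> l" using InvSplit_node[OF RespSplit_invoked[OF assms]] by auto
  have "0 < card {p. RespSplit p i Right \<in> set tr}"
    using assms finite_event_owners[of "\<lambda>p. RespSplit p i Right" tr] by (auto simp: card_gt_0_iff)
  also have "\<dots> \<le> card {p. InvSplit p i \<in> set tr} - 1"
    using splitter_ok_node[OF \<open>1 \<le> i\<close> \<open>i \<le> l\<close>] by (simp add: splitter_ok_def Let_def)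
  also have "\<dots> \<le> card (accessing tr) - i"
    using InvSplit_callers_bound[OF \<open>1 \<le> i\<close> \<open>i \<le> l\<close>] by simp
  finally show ?thesis by simp
qed

lemma visits_le_card_accessing:
  assumes "p \<in> accessing tr" and "visits l tr p j"
  shows "j \<le> card (accessing tr)"
proof -
  from assms(2) obtain n s where "exec l (take n tr) = Some s" and node: "node_of (s p) = Some j"
    unfolding visits_def by blast
  then interpret prefix: path_execution l "take n tr" s
    using path_nonempty by unfold_locales
  from prefix.node_of_final_state[OF node] set_take_subset[of n tr]
  have "j = 1 \<or> (\<exists>i. j \<le> Suc i \<and> RespSplit p i Right \<in> set tr)" by blast
  then show ?thesis
  proof
    assume "j = 1"
    with assms(1) finite_accessing show ?thesis by (auto simp: Suc_le_eq card_gt_0_iff)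
  next
    assume "\<exists>i. j \<le> Suc i \<and> RespSplit p i Right \<in> set tr"
    then show ?thesis using Right_below_card_accessing by fastforce
  qed
qed

lemma no_FellOff:
  assumes "card (accessing tr) \<le> l"
  shows "st p \<noteq> FellOff"
  using FellOff_RespSplit_last Right_below_card_accessing assms by fastforce

end

theorem lemma7:
  fixes l :: nat and tr :: "'p event list" and st :: "'p \<Rightarrow> pstate"
  assumes "l \<ge> 1"
    and "exec l tr = Some st"
    and "objects_ok l tr"
  shows "(\<forall>p q. st p = Won \<longrightarrow> st q = Won \<longrightarrow> p = q)
       \<and> (accessing tr \<noteq> {} \<and> (\<forall>p \<in> accessing tr. completed (st p))
           \<longrightarrow> (\<exists>p \<in> accessing tr. st p \<noteq> Lost))
       \<and> (card (accessing tr) \<le> l \<longrightarrow>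
           (\<forall>p \<in> accessing tr. \<forall>j. visits l tr p j \<longrightarrow> j \<le> card (accessing tr))
         \<and> (\<forall>p. st p \<noteq> FellOff))"
proof -
  interpret path_adversary l tr st
    using assms by unfold_locales
  show ?thesis
    using at_most_one_Won not_all_Lost visits_le_card_accessing no_FellOff by blast
qed

end
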